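(* In the multi-agent combinatorial-actions contract model (described in the context), suppose the reward function $f$ is submodular. Let $\boldsymbol{\alpha}\in\mathbb{R}_{\ge0}^A$ be a contract and let $S\subseteq T$ be subset-stable with respect to $\boldsymbol{\alpha}$, such that $S\cap T_i=\emptyset$ for every agent $i$ with $\alpha_i=0$. Then every pure Nash equilibrium $S^\dagger$ with respect to the contract $2\boldsymbol{\alpha}$ satisfies $f(S^\dagger)\ge\frac12f(S)$.
   Context: Model: principal and agents $A=[n]$; each agent $i$ has a finite action set $T_i$ (pairwise disjoint), $T=\bigsqcup_iT_i$, costs $c_j\ge0$, $c(S_i)=\sum_{j\in S_i}c_j$. Reward $f:2^T\to[0,1]$ monotone, $f(\emptyset)=0$; submodular means $f(S'\cup\{a\})-f(S')\ge f(S\cup\{a\})-f(S)$ for $S'\subseteq S$, $a\notin S$. For a profile $S\subseteq T$ write $S_i=S\cap T_i$, $S_{-i}=S\setminus S_i$. Under a contract $\boldsymbol{\alpha}$ agent $i$'s utility is $\alpha_if(S)-c(S_i)$; $S$ is a pure Nash equilibrium of $\boldsymbol{\alpha}$ if for every $i$ and every $S'_i\subseteq T_i$, $\alpha_if(S_i\sqcup S_{-i})-c(S_i)\ge\alpha_if(S'_i\sqcup S_{-i})-c(S'_i)$. $S$ is subset-stable with respect to $\boldsymbol{\alpha}$ if the same inequality holds for every $i$ and every $S'_i\subseteq S_i$. *)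

theory Defs
  imports Main "HOL-Library.FuncSet" Complex_Main
begin

definition ground :: "'i set \<Rightarrow> ('i \<Rightarrow> 'a set) \<Rightarrow> 'a set" where
  "ground A T = (\<Union>i\<in>A. T i)"

definition cost :: "('a \<Rightarrow> real) \<Rightarrow> 'a set \<Rightarrow> real" where
  "cost c X = (\<Sum>j\<in>X. c j)"

definition valid_model ::
  "'i set \<Rightarrow> ('i \<Rightarrow> 'a set) \<Rightarrow> ('a \<Rightarrow> real) \<Rightarrow> ('a set \<Rightarrow> real) \<Rightarrow> bool" where
  "valid_model A T c f \<longleftrightarrow>
     finite A \<and> (\<forall>i\<in>A. finite (T i)) \<and>
     (\<forall>i\<in>A. \<forall>k\<in>A. i \<noteq> k \<longrightarrow> T i \<inter> T k = {}) \<and>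
     (\<forall>j\<in>ground A T. c j \<ge> 0) \<and>
     f {} = 0 \<and>
     (\<forall>S\<subseteq>ground A T. 0 \<le> f S \<and> f S \<le> 1) \<and>
     (\<forall>S S'. S \<subseteq> S' \<and> S' \<subseteq> ground A T \<longrightarrow> f S \<le> f S')"

definition submodular :: "'a set \<Rightarrow> ('a set \<Rightarrow> real) \<Rightarrow> bool" where
  "submodular G f \<longleftrightarrow>
     (\<forall>S' S a. S' \<subseteq> S \<and> S \<subseteq> G \<and> a \<in> G \<and> a \<notin> S \<longrightarrow>
        f (S' \<union> {a}) - f S' \<ge> f (S \<union> {a}) - f S)"

definition utility ::
  "('i \<Rightarrow> 'a set) \<Rightarrow> ('a \<Rightarrow> real) \<Rightarrow> ('a set \<Rightarrow> real) \<Rightarrow> ('i \<Rightarrow> real) \<Rightarrow> 'i \<Rightarrow> 'a set \<Rightarrow> real" where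
  "utility T c f \<alpha> i S = \<alpha> i * f S - cost c (S \<inter> T i)"

definition pure_NE ::
  "'i set \<Rightarrow> ('i \<Rightarrow> 'a set) \<Rightarrow> ('a \<Rightarrow> real) \<Rightarrow> ('a set \<Rightarrow> real) \<Rightarrow> ('i \<Rightarrow> real) \<Rightarrow> 'a set \<Rightarrow> bool" where
  "pure_NE A T c f \<alpha> S \<longleftrightarrow> S \<subseteq> ground A T \<and>
     (\<forall>i\<in>A. \<forall>Si'. Si' \<subseteq> T i \<longrightarrow>
        \<alpha> i * f (S \<inter> T i \<union> (S - T i)) - cost c (S \<inter> T i)
          \<ge> \<alpha> i * f (Si' \<union> (S - T i)) - cost c Si')"

definition subset_stable ::
  "'i set \<Rightarrow> ('i \<Rightarrow> 'a set) \<Rightarrow> ('a \<Rightarrow> real) \<Rightarrow> ('a set \<Rightarrow> real) \<Rightarrow> ('i \<Rightarrow> real) \<Rightarrow> 'a set \<Rightarrow> bool" where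
  "subset_stable A T c f \<alpha> S \<longleftrightarrow> S \<subseteq> ground A T \<and>
     (\<forall>i\<in>A. \<forall>Si'. Si' \<subseteq> S \<inter> T i \<longrightarrow>
        \<alpha> i * f (S \<inter> T i \<union> (S - T i)) - cost c (S \<inter> T i)
          \<ge> \<alpha> i * f (Si' \<union> (S - T i)) - cost c Si')"

end

theory Submission
  imports Defs
begin

text \<open>For each agent \<open>i\<close> let \<open>D\<^sub>i = S\<^sub>i - S\<^sup>\<dagger>\<close>. Adding \<open>D\<^sub>i\<close> is an available deviation at the
equilibrium \<open>S\<^sup>\<dagger>\<close> of \<open>2\<alpha>\<close>, and dropping \<open>D\<^sub>i\<close> is a subset deviation at \<open>S\<close>; both are priced at
\<open>c(D\<^sub>i)\<close>, so \<open>2\<alpha>\<^sub>i (f(S\<^sup>\<dagger> \<union> D\<^sub>i) - f(S\<^sup>\<dagger>)) \<le> c(D\<^sub>i) \<le> \<alpha>\<^sub>i (f(S) - f(S - D\<^sub>i))\<close>; agents with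
\<open>\<alpha>\<^sub>i = 0\<close> have \<open>D\<^sub>i = {}\<close>. Summing over the agents, submodularity bounds the sum of the
left-hand marginals from below by \<open>f(S\<^sup>\<dagger> \<union> S) - f(S\<^sup>\<dagger>)\<close> and that of the right-hand ones from
above by \<open>f(S) - f(S \<inter> S\<^sup>\<dagger>) \<le> f(S)\<close>, whence \<open>2(f(S) - f(S\<^sup>\<dagger>)) \<le> f(S)\<close> by monotonicity.\<close>

lemma valid_model_mono_on:
  assumes "valid_model A T c f"
  shows "mono_on (Pow (ground A T)) f"
  using assms unfolding valid_model_def by (auto intro: mono_onI)

lemma submodular_marginal_antimono:
  assumes sub: "submodular G f" and mono: "mono_on (Pow G) f"
    and "X \<subseteq> Y" "Y \<subseteq> G" "b \<in> G"
  shows "f (Y \<union> {b}) - f Y \<le> f (X \<union> {b}) - f X"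
proof (cases "b \<in> Y")
  case True
  then have "Y \<union> {b} = Y" by auto
  moreover have "f X \<le> f (X \<union> {b})"
    using assms by (intro mono_onD[OF mono]) auto
  ultimately show ?thesis by simp
next
  case False
  then show ?thesis using sub assms unfolding submodular_def by blast
qed

lemma submodular_set_marginal_antimono:
  assumes sub: "submodular G f" and mono: "mono_on (Pow G) f"
    and "finite B" "B \<subseteq> G" "X \<subseteq> Y" "Y \<subseteq> G"
  shows "f (Y \<union> B) - f Y \<le> f (X \<union> B) - f X"
  using assms(3-)
proof (induction B arbitrary: X Y rule: finite_induct)
  case empty
  then show ?case by simp
next
  case (insert b B)
  have "f ((Y \<union> B) \<union> {b}) - f (Y \<union> B) \<le> f ((X \<union> B) \<union> {b}) - f (X \<union> B)"
    using insert.prems by (intro submodular_marginal_antimono[OF sub mono]) auto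
  moreover have "f (Y \<union> B) - f Y \<le> f (X \<union> B) - f X"
    using insert by auto
  ultimately show ?case by simp
qed

lemma submodular_marginal_UNION_le_sum:
  assumes sub: "submodular G f" and mono: "mono_on (Pow G) f"
    and "finite I" "X \<subseteq> G" "\<And>i. i \<in> I \<Longrightarrow> finite (P i) \<and> P i \<subseteq> G"
  shows "f (X \<union> (\<Union>i\<in>I. P i)) - f X \<le> (\<Sum>i\<in>I. f (X \<union> P i) - f X)"
  using assms(3-)
proof (induction I rule: finite_induct)
  case empty
  then show ?case by simp
next
  case (insert k I)
  have "f ((X \<union> (\<Union>i\<in>I. P i)) \<union> P k) - f (X \<union> (\<Union>i\<in>I. P i)) \<le> f (X \<union> P k) - f X"
    using insert.prems by (intro submodular_set_marginal_antimono[OF sub mono]) auto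
  moreover have "X \<union> (\<Union>i\<in>insert k I. P i) = (X \<union> (\<Union>i\<in>I. P i)) \<union> P k" by auto
  ultimately show ?case using insert by simp
qed

lemma submodular_sum_removal_le_removal_UNION:
  assumes sub: "submodular G f" and mono: "mono_on (Pow G) f"
    and "finite I" "Z \<subseteq> G" "\<And>i. i \<in> I \<Longrightarrow> finite (D i) \<and> D i \<subseteq> Z"
    and disj: "\<And>i k. i \<in> I \<Longrightarrow> k \<in> I \<Longrightarrow> i \<noteq> k \<Longrightarrow> D i \<inter> D k = {}"
  shows "(\<Sum>i\<in>I. f Z - f (Z - D i)) \<le> f Z - f (Z - (\<Union>i\<in>I. D i))"
  using assms(3-)
proof (induction I rule: finite_induct)
  case empty
  then show ?case by simp
next
  case (insert k I)
  let ?R = "Z - (\<Union>i\<in>insert k I. D i)"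
  have "f ((Z - D k) \<union> D k) - f (Z - D k) \<le> f (?R \<union> D k) - f ?R"
    using insert.prems(1,2) by (intro submodular_set_marginal_antimono[OF sub mono]) auto
  moreover have "(Z - D k) \<union> D k = Z"
    using insert.prems(2) by auto
  moreover have "?R \<union> D k = Z - (\<Union>i\<in>I. D i)"
    using insert.prems insert.hyps(2) by fastforce
  ultimately show ?case using insert by simp
qed

lemma submodular_le_twice_of_part_marginals:
  assumes sub: "submodular G f" and mono: "mono_on (Pow G) f"
    and nonneg: "\<And>X. X \<subseteq> G \<Longrightarrow> 0 \<le> f X"
    and "finite I" "S \<subseteq> G" "S' \<subseteq> G"
    and parts: "\<And>i. i \<in> I \<Longrightarrow> finite (D i) \<and> D i \<subseteq> S"
    and disj: "\<And>i k. i \<in> I \<Longrightarrow> k \<in> I \<Longrightarrow> i \<noteq> k \<Longrightarrow> D i \<inter> D k = {}"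
    and cover: "(\<Union>i\<in>I. D i) = S - S'"
    and double: "\<And>i. i \<in> I \<Longrightarrow> 2 * (f (S' \<union> D i) - f S') \<le> f S - f (S - D i)"
  shows "f S \<le> 2 * f S'"
proof -
  have "\<And>i. i \<in> I \<Longrightarrow> finite (D i) \<and> D i \<subseteq> G"
    using parts \<open>S \<subseteq> G\<close> by blast
  then have "f (S' \<union> S) - f S' \<le> (\<Sum>i\<in>I. f (S' \<union> D i) - f S')"
    using submodular_marginal_UNION_le_sum[where P = D, OF sub mono \<open>finite I\<close> \<open>S' \<subseteq> G\<close>]
    unfolding cover Un_Diff_cancel by blast
  moreover have "(\<Sum>i\<in>I. f S - f (S - D i)) \<le> f S - f (S \<inter> S')"
    using submodular_sum_removal_le_removal_UNION[where D = D, OF sub mono \<open>finite I\<close> \<open>S \<subseteq> G\<close> parts disj]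
    unfolding cover Diff_Diff_Int .
  moreover have "2 * (\<Sum>i\<in>I. f (S' \<union> D i) - f S') \<le> (\<Sum>i\<in>I. f S - f (S - D i))"
    unfolding sum_distrib_left by (intro sum_mono double)
  moreover have "f S \<le> f (S' \<union> S)"
    using \<open>S \<subseteq> G\<close> \<open>S' \<subseteq> G\<close> by (intro mono_onD[OF mono]) auto
  moreover have "0 \<le> f (S \<inter> S')"
    using \<open>S \<subseteq> G\<close> by (intro nonneg) auto
  ultimately show ?thesis by linarith
qed

lemma cost_union_disjoint:
  "finite X \<Longrightarrow> finite Y \<Longrightarrow> X \<inter> Y = {} \<Longrightarrow> cost c (X \<union> Y) = cost c X + cost c Y"
  unfolding cost_def by (rule sum.union_disjoint)

lemma pure_NE_add_actions_bound:
  assumes "pure_NE A T c f \<beta> S" "i \<in> A" "finite (T i)" "D \<subseteq> T i - S"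
  shows "\<beta> i * (f (S \<union> D) - f S) \<le> cost c D"
proof -
  have "S \<inter> T i \<union> D \<subseteq> T i" using assms(4) by auto
  then have "\<beta> i * f (S \<inter> T i \<union> (S - T i)) - cost c (S \<inter> T i)
      \<ge> \<beta> i * f ((S \<inter> T i \<union> D) \<union> (S - T i)) - cost c (S \<inter> T i \<union> D)"
    using assms(1,2) unfolding pure_NE_def by simp
  moreover have "S \<inter> T i \<union> (S - T i) = S" "(S \<inter> T i \<union> D) \<union> (S - T i) = S \<union> D"
    using assms(4) by auto
  moreover have "cost c (S \<inter> T i \<union> D) = cost c (S \<inter> T i) + cost c D"
    using assms(3,4) by (intro cost_union_disjoint) (auto intro: finite_subset)
  ultimately show ?thesis by (simp add: algebra_simps)
qed

lemma subset_stable_drop_actions_bound: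
  assumes "subset_stable A T c f \<alpha> S" "i \<in> A" "finite (T i)" "D \<subseteq> S \<inter> T i"
  shows "cost c D \<le> \<alpha> i * (f S - f (S - D))"
proof -
  have "S \<inter> T i - D \<subseteq> S \<inter> T i" by auto
  then have "\<alpha> i * f (S \<inter> T i \<union> (S - T i)) - cost c (S \<inter> T i)
      \<ge> \<alpha> i * f ((S \<inter> T i - D) \<union> (S - T i)) - cost c (S \<inter> T i - D)"
    using assms(1,2) unfolding subset_stable_def by simp
  moreover have "S \<inter> T i \<union> (S - T i) = S" "(S \<inter> T i - D) \<union> (S - T i) = S - D"
    using assms(4) by auto
  moreover have "cost c (S \<inter> T i) = cost c (S \<inter> T i - D) + cost c D"
  proof -
    have "finite D" using assms(3,4) finite_subset by blast
    then have "cost c ((S \<inter> T i - D) \<union> D) = cost c (S \<inter> T i - D) + cost c D"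
      using assms(3) by (intro cost_union_disjoint) auto
    moreover have "(S \<inter> T i - D) \<union> D = S \<inter> T i" using assms(4) by auto
    ultimately show ?thesis by simp
  qed
  ultimately show ?thesis by (simp add: algebra_simps)
qed

lemma agent_marginal_doubling:
  assumes "valid_model A T c f" "i \<in> A" "\<alpha> i \<ge> 0" "\<alpha> i = 0 \<longrightarrow> S \<inter> T i = {}"
    and "subset_stable A T c f \<alpha> S" "pure_NE A T c f (\<lambda>i. 2 * \<alpha> i) Sd"
  defines "D \<equiv> S \<inter> T i - Sd"
  shows "2 * (f (Sd \<union> D) - f Sd) \<le> f S - f (S - D)"
proof (cases "\<alpha> i = 0")
  case True
  then show ?thesis using assms(4) by (simp add: D_def)
next
  case False
  have "finite (T i)" using assms(1,2) by (simp add: valid_model_def)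
  moreover have "D \<subseteq> T i - Sd" "D \<subseteq> S \<inter> T i" by (auto simp: D_def)
  ultimately have "2 * \<alpha> i * (f (Sd \<union> D) - f Sd) \<le> cost c D"
    and "cost c D \<le> \<alpha> i * (f S - f (S - D))"
    using pure_NE_add_actions_bound[OF assms(6,2)] subset_stable_drop_actions_bound[OF assms(5,2)]
    by simp_all
  then have "\<alpha> i * (2 * (f (Sd \<union> D) - f Sd)) \<le> \<alpha> i * (f S - f (S - D))"
    by (simp add: algebra_simps)
  then show ?thesis using False assms(3) by simp
qed

theorem lemma2p3:
  fixes A :: "'i set" and T :: "'i \<Rightarrow> 'a set" and c :: "'a \<Rightarrow> real"
    and f :: "'a set \<Rightarrow> real" and \<alpha> :: "'i \<Rightarrow> real" and S Sd :: "'a set"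
  assumes "valid_model A T c f"
    and "submodular (ground A T) f"
    and "\<forall>i\<in>A. \<alpha> i \<ge> 0"
    and "subset_stable A T c f \<alpha> S"
    and "\<forall>i\<in>A. \<alpha> i = 0 \<longrightarrow> S \<inter> T i = {}"
    and "pure_NE A T c f (\<lambda>i. 2 * \<alpha> i) Sd"
  shows "f Sd \<ge> f S / 2"
proof -
  let ?G = "ground A T"
  have "S \<subseteq> ?G" "Sd \<subseteq> ?G"
    using assms(4,6) unfolding subset_stable_def pure_NE_def by auto
  have "finite A" and fin: "\<And>i. i \<in> A \<Longrightarrow> finite (T i)"
    and disj: "\<And>i k. i \<in> A \<Longrightarrow> k \<in> A \<Longrightarrow> i \<noteq> k \<Longrightarrow> T i \<inter> T k = {}"
    and nonneg: "\<And>X. X \<subseteq> ?G \<Longrightarrow> 0 \<le> f X"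
    using assms(1) unfolding valid_model_def by auto
  have "f S \<le> 2 * f Sd"
  proof (rule submodular_le_twice_of_part_marginals
      [where D = "\<lambda>i. S \<inter> T i - Sd", OF assms(2) valid_model_mono_on[OF assms(1)] nonneg
        \<open>finite A\<close> \<open>S \<subseteq> ?G\<close> \<open>Sd \<subseteq> ?G\<close>])
    show "(\<Union>i\<in>A. S \<inter> T i - Sd) = S - Sd"
      using \<open>S \<subseteq> ?G\<close> by (auto simp: ground_def)
    show "2 * (f (Sd \<union> (S \<inter> T i - Sd)) - f Sd) \<le> f S - f (S - (S \<inter> T i - Sd))" if "i \<in> A" for i
      using agent_marginal_doubling[OF assms(1) that _ _ assms(4,6)] assms(3,5) that by blast
  qed (use fin disj in auto)
  then show ?thesis by simp
qed

end
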